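(* Let $G\subset\mathbb{R}^2$ be (the open domain bounded by) a convex polygon with smallest inner angle $\alpha\in(0,\pi)$. Then \[ A_G\ge 1+\frac{1}{\sin\frac{\alpha}{2}}. \]
   Context: For a domain $G\subsetneq\mathbb{R}^n$ let $d_G(x)=d(x,\partial G)$. The quasihyperbolic distance is $k_G(x,y)=\inf_\gamma\int_\gamma\frac{|dx|}{d_G(x)}$ over rectifiable curves $\gamma\subset G$ joining $x$ and $y$. The distance ratio metric is $j_G(x,y)=\log\left(1+\frac{|x-y|}{\min\{d_G(x),d_G(y)\}}\right)$. The uniformity constant is $A_G=\inf\{A\ge1: k_G(x,y)\le A\,j_G(x,y)\text{ for all }x,y\in G\}$ (with $\inf\emptyset=+\infty$). *)

theory Defs
  imports "HOL-Analysis.Analysis"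
begin

definition bdist :: "'a::euclidean_space set \<Rightarrow> 'a \<Rightarrow> real" where
  "bdist G x = infdist x (frontier G)"

definition partition01 :: "nat \<Rightarrow> (nat \<Rightarrow> real) \<Rightarrow> bool" where
  "partition01 n t \<longleftrightarrow> t 0 = 0 \<and> t n = 1 \<and> (\<forall>i<n. t i \<le> t (Suc i))"

definition curve_length :: "(real \<Rightarrow> 'a::euclidean_space) \<Rightarrow> ereal" where
  "curve_length \<gamma> = (SUP nt \<in> {(n,t). partition01 n t}.
      ereal (\<Sum>i<fst nt. dist (\<gamma> (snd nt (Suc i))) (\<gamma> (snd nt i))))"

definition rectifiable_curve :: "(real \<Rightarrow> 'a::euclidean_space) \<Rightarrow> bool" where
  "rectifiable_curve \<gamma> \<longleftrightarrow> path \<gamma> \<and> curve_length \<gamma> < \<infinity>"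

text \<open>Line integral with respect to arc length of a weight f along \<gamma>,
  as the supremum of lower Riemann--Stieltjes sums (for continuous f and rectifiable \<gamma>
  this equals the arc-length integral).\<close>
definition arclength_integral ::
    "('a::euclidean_space \<Rightarrow> real) \<Rightarrow> (real \<Rightarrow> 'a) \<Rightarrow> ereal" where
  "arclength_integral f \<gamma> = (SUP nt \<in> {(n,t). partition01 n t}.
      ereal (\<Sum>i<fst nt. (INF s \<in> {snd nt i .. snd nt (Suc i)}. f (\<gamma> s)) *
                         dist (\<gamma> (snd nt (Suc i))) (\<gamma> (snd nt i))))"

definition qh_dist :: "'a::euclidean_space set \<Rightarrow> 'a \<Rightarrow> 'a \<Rightarrow> ereal" where
  "qh_dist G x y = (INF \<gamma> \<in> {\<gamma>. rectifiable_curve \<gamma> \<and> path_image \<gamma> \<subseteq> G \<and>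
        pathstart \<gamma> = x \<and> pathfinish \<gamma> = y}.
      arclength_integral (\<lambda>z. 1 / bdist G z) \<gamma>)"

definition j_dist :: "'a::euclidean_space set \<Rightarrow> 'a \<Rightarrow> 'a \<Rightarrow> real" where
  "j_dist G x y = ln (1 + dist x y / min (bdist G x) (bdist G y))"

text \<open>Uniformity constant (Inf of the empty set is \<infinity>).\<close>
definition uniformity_const :: "'a::euclidean_space set \<Rightarrow> ereal" where
  "uniformity_const G = Inf {ereal A | A. A \<ge> 1 \<and>
      (\<forall>x\<in>G. \<forall>y\<in>G. qh_dist G x y \<le> ereal (A * j_dist G x y))}"

definition vec_angle :: "'a::euclidean_space \<Rightarrow> 'a \<Rightarrow> real" where
  "vec_angle u v = arccos ((u \<bullet> v) / (norm u * norm v))"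

text \<open>A convex polygon given by its vertex set P: finitely many points in convex position
  (no vertex in the convex hull of the others) spanning a set with nonempty interior.\<close>
definition convex_polygon_vertices :: "(real^2) set \<Rightarrow> bool" where
  "convex_polygon_vertices P \<longleftrightarrow> finite P \<and> card P \<ge> 3 \<and>
     (\<forall>p\<in>P. p \<notin> convex hull (P - {p})) \<and> interior (convex hull P) \<noteq> {}"

text \<open>Inner angle of the polygon at vertex p: the angle between the two edges at p,
  which equals the largest angle at p subtended by two other vertices.\<close>
definition inner_angle :: "(real^2) set \<Rightarrow> real^2 \<Rightarrow> real" where
  "inner_angle P p = Max {vec_angle (q - p) (r - p) | q r. q \<in> P - {p} \<and> r \<in> P - {p}}"

definition smallest_inner_angle :: "(real^2) set \<Rightarrow> real" where
  "smallest_inner_angle P = Min (inner_angle P ` P)"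

end

theory Submission
  imports Defs
begin

text \<open>At a vertex \<open>p\<close> of smallest angle \<open>\<alpha>\<close> the polygon lies in the sector spanned by its two
  edges, so the distance to the boundary is at most \<open>sin (\<alpha>/2) |z - p|\<close>. Take \<open>x\<close> near \<open>p\<close> and
  \<open>y\<close> near another vertex \<open>f\<close>, both at distance about \<open>t\<close> from the boundary, with
  \<open>t \<approx> |p - f| / \<lambda>\<^sup>N\<close>. A curve from \<open>x\<close> to \<open>y\<close> must first multiply its distance to \<open>p\<close> by
  \<open>\<lambda>\<^sup>N\<close> and afterwards divide \<open>d(y) + |z - y|\<close> by \<open>\<lambda>\<^sup>N\<close>; cutting it where these quantities pass
  the levels \<open>\<lambda>\<^sup>i\<close> gives lower sums showing \<open>k\<^sub>G(x, y) \<ge> N (1 - 1/\<lambda>) (1 + 1/sin(\<alpha>/2))\<close>,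
  whereas \<open>j\<^sub>G(x, y) \<le> N ln \<lambda> + O(1)\<close>. Letting \<open>N \<rightarrow> \<infinity>\<close> and then \<open>\<lambda> \<rightarrow> 1\<close> gives the bound.\<close>

section \<open>Distance to the boundary\<close>

lemma bdist_le_dist_outside:
  fixes G :: "'a::euclidean_space set"
  assumes "z \<in> G" "f \<notin> G"
  shows "bdist G z \<le> dist z f"
proof -
  obtain b where b: "b \<in> closed_segment z f" "b \<in> frontier G"
    using connected_Int_frontier[of "closed_segment z f" G] assms by auto
  have "bdist G z \<le> dist z b"
    unfolding bdist_def using b(2) by (rule infdist_le)
  also have "\<dots> \<le> dist z f"
    using dist_in_closed_segment[OF b(1)] by (simp add: dist_commute)
  finally show ?thesis .
qed

lemma le_bdist_if_ball_subset:
  fixes G :: "'a::euclidean_space set"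
  assumes "open G" "G \<noteq> UNIV" "ball z e \<subseteq> G"
  shows "e \<le> bdist G z"
proof (cases "e > 0")
  case True
  then have "frontier G \<noteq> {}"
    using assms by (intro frontier_not_empty) auto
  moreover have "e \<le> dist z a" if "a \<in> frontier G" for a
    using that assms(1,3) by (force simp: frontier_def interior_open)
  ultimately show ?thesis
    unfolding bdist_def infdist_def by (auto intro: cINF_greatest)
next
  case False
  then show ?thesis
    using infdist_nonneg[of z "frontier G"] by (simp add: bdist_def)
qed

lemma bdist_pos:
  fixes G :: "'a::euclidean_space set"
  assumes "open G" "G \<noteq> UNIV" "z \<in> G"
  shows "0 < bdist G z"
proof -
  obtain e where "e > 0" "ball z e \<subseteq> G"
    using assms(1,3) openE by blast
  then show ?thesis
    using le_bdist_if_ball_subset[OF assms(1,2)] by force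
qed

lemma bdist_le_halfspace:
  fixes G :: "'a::euclidean_space set"
  assumes "a \<noteq> 0" "open G" "G \<subseteq> {w. 0 \<le> a \<bullet> (w - p)}" "z \<in> G"
  shows "bdist G z \<le> a \<bullet> (z - p) / norm a"
proof -
  define f where "f = z - (a \<bullet> (z - p) / (norm a)\<^sup>2) *\<^sub>R a"
  have "{w. 0 \<le> a \<bullet> (w - p)} = {w. a \<bullet> p \<le> a \<bullet> w}"
    by (auto simp: inner_diff_right)
  then have "G \<subseteq> {w. a \<bullet> p < a \<bullet> w}"
    using interior_maximal[OF assms(3,2)] interior_halfspace_ge[OF assms(1)] by auto
  moreover have "a \<bullet> f = a \<bullet> p"
    using assms(1) by (simp add: f_def inner_diff_right power2_norm_eq_inner)
  ultimately have "f \<notin> G"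
    by auto
  then have "bdist G z \<le> dist z f"
    by (rule bdist_le_dist_outside[OF assms(4)])
  also have "dist z f = a \<bullet> (z - p) / norm a"
  proof -
    have "0 \<le> a \<bullet> (z - p)"
      using assms(3,4) by auto
    then show ?thesis
      using assms(1) by (simp add: f_def dist_norm power2_eq_square)
  qed
  finally show ?thesis .
qed

text \<open>For unit vectors \<open>U \<noteq> \<plusminus>V\<close> of the plane, the closed sector at \<open>p\<close> between the rays
  along \<open>U\<close> and \<open>V\<close>: \<open>V - (U \<bullet> V) *\<^sub>R U\<close> is the normal to \<open>U\<close> pointing towards \<open>V\<close>
  and vice versa.\<close>
definition wedge :: "'a::real_inner \<Rightarrow> 'a \<Rightarrow> 'a \<Rightarrow> 'a set" where
  "wedge p U V = {w. 0 \<le> (V - (U \<bullet> V) *\<^sub>R U) \<bullet> (w - p) \<and> 0 \<le> (U - (U \<bullet> V) *\<^sub>R V) \<bullet> (w - p)}"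

lemma convex_wedge: "convex (wedge p U V)"
proof -
  have "wedge p U V = {w. (V - (U \<bullet> V) *\<^sub>R U) \<bullet> p \<le> (V - (U \<bullet> V) *\<^sub>R U) \<bullet> w}
      \<inter> {w. (U - (U \<bullet> V) *\<^sub>R V) \<bullet> p \<le> (U - (U \<bullet> V) *\<^sub>R V) \<bullet> w}"
    unfolding wedge_def by (auto simp: inner_diff_right)
  then show ?thesis
    by (simp add: convex_Int convex_halfspace_ge)
qed

lemma norm_unit_normal:
  fixes U V :: "'a::real_inner"
  assumes "norm U = 1" "norm V = 1"
  shows "norm (V - (U \<bullet> V) *\<^sub>R U) = sqrt (1 - (U \<bullet> V)\<^sup>2)"
proof -
  have "(norm (V - (U \<bullet> V) *\<^sub>R U))\<^sup>2 = 1 - (U \<bullet> V)\<^sup>2"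
    unfolding power2_norm_eq_inner using assms
    by (simp add: inner_diff_left inner_diff_right inner_commute power2_eq_square norm_eq_1)
  then show ?thesis
    by (simp add: real_sqrt_unique)
qed

lemma one_minus_inner_mult_norm_add:
  fixes U V :: "'a::real_inner"
  assumes U: "norm U = 1" and V: "norm V = 1" and c: "\<bar>U \<bullet> V\<bar> < 1"
  shows "(1 - U \<bullet> V) * norm (U + V) = 2 * sqrt ((1 - U \<bullet> V) / 2) * sqrt (1 - (U \<bullet> V)\<^sup>2)"
proof -
  define c where "c = U \<bullet> V"
  have n2: "(norm (U + V))\<^sup>2 = 2 * (1 + c)"
    using U V by (simp add: c_def power2_norm_eq_inner inner_add_left inner_add_right
        inner_commute norm_eq_1)
  have s2: "(sqrt ((1 - c) / 2))\<^sup>2 = (1 - c) / 2" and \<sigma>2: "(sqrt (1 - c\<^sup>2))\<^sup>2 = 1 - c\<^sup>2"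
    using c by (simp_all add: c_def abs_square_less_1 less_imp_le)
  have "((1 - c) * norm (U + V))\<^sup>2 = (1 - c)\<^sup>2 * (2 * (1 + c))"
    by (simp add: power_mult_distrib n2)
  also have "\<dots> = 2\<^sup>2 * ((1 - c) / 2) * (1 - c\<^sup>2)"
    by (simp add: power2_eq_square algebra_simps)
  also have "\<dots> = (2 * sqrt ((1 - c) / 2) * sqrt (1 - c\<^sup>2))\<^sup>2"
    by (simp only: power_mult_distrib s2 \<sigma>2)
  finally have sq: "((1 - c) * norm (U + V))\<^sup>2 = (2 * sqrt ((1 - c) / 2) * sqrt (1 - c\<^sup>2))\<^sup>2" .
  have "0 \<le> 1 - c" "0 \<le> 1 - c\<^sup>2"
    using c by (simp_all add: c_def abs_square_less_1 less_imp_le)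
  then show ?thesis
    unfolding c_def[symmetric] by (intro power2_eq_imp_eq[OF sq]) simp_all
qed

text \<open>The smaller of the two distances to the sides is at most their average, which
  Cauchy--Schwarz bounds by the half-angle sine.\<close>
lemma bdist_le_wedge:
  fixes G :: "'a::euclidean_space set"
  assumes U: "norm U = 1" and V: "norm V = 1" and c: "\<bar>U \<bullet> V\<bar> < 1"
    and "open G" "G \<subseteq> wedge p U V" "z \<in> G"
  shows "bdist G z \<le> sqrt ((1 - U \<bullet> V) / 2) * dist z p"
proof -
  define c where "c = U \<bullet> V"
  define \<sigma> where "\<sigma> = sqrt (1 - c\<^sup>2)"
  have \<sigma>: "\<sigma> > 0"
    using c by (simp add: \<sigma>_def c_def abs_square_less_1)
  have nU: "norm (V - c *\<^sub>R U) = \<sigma>" and nV: "norm (U - c *\<^sub>R V) = \<sigma>"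
    using norm_unit_normal[OF U V] norm_unit_normal[OF V U]
    by (simp_all add: c_def \<sigma>_def inner_commute)
  have "G \<subseteq> {w. 0 \<le> (V - c *\<^sub>R U) \<bullet> (w - p)}" "G \<subseteq> {w. 0 \<le> (U - c *\<^sub>R V) \<bullet> (w - p)}"
    using assms(5) by (auto simp: wedge_def c_def inner_commute)
  then have "bdist G z \<le> (V - c *\<^sub>R U) \<bullet> (z - p) / \<sigma>" "bdist G z \<le> (U - c *\<^sub>R V) \<bullet> (z - p) / \<sigma>"
    using bdist_le_halfspace[OF _ \<open>open G\<close> _ \<open>z \<in> G\<close>] nU nV \<sigma> by (metis norm_zero less_irrefl)+
  then have "2 * bdist G z \<le> ((V - c *\<^sub>R U) + (U - c *\<^sub>R V)) \<bullet> (z - p) / \<sigma>"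
    by (simp add: inner_add_left add_divide_distrib)
  also have "\<dots> = ((1 - c) *\<^sub>R (U + V)) \<bullet> (z - p) / \<sigma>"
    by (simp add: algebra_simps)
  also have "\<dots> \<le> (1 - c) * norm (U + V) * dist z p / \<sigma>"
    using c \<sigma> norm_cauchy_schwarz[of "U + V" "z - p"]
    by (auto simp: c_def dist_norm mult.assoc intro!: divide_right_mono mult_left_mono)
  also have "\<dots> = 2 * sqrt ((1 - c) / 2) * \<sigma> * dist z p / \<sigma>"
    using one_minus_inner_mult_norm_add[OF U V c] by (simp add: c_def \<sigma>_def)
  finally show ?thesis
    using \<sigma> by (simp add: c_def)
qed

section \<open>Lower sums along geometric ladders\<close>

definition is_partition :: "real \<Rightarrow> real \<Rightarrow> nat \<Rightarrow> (nat \<Rightarrow> real) \<Rightarrow> bool" where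
  "is_partition a b n t \<longleftrightarrow> t 0 = a \<and> t n = b \<and> (\<forall>i<n. t i \<le> t (Suc i))"

definition lower_sum :: "('a::metric_space \<Rightarrow> real) \<Rightarrow> (real \<Rightarrow> 'a) \<Rightarrow> nat \<Rightarrow> (nat \<Rightarrow> real) \<Rightarrow> real"
  where "lower_sum f \<gamma> n t =
    (\<Sum>i<n. (INF s\<in>{t i..t (Suc i)}. f (\<gamma> s)) * dist (\<gamma> (t (Suc i))) (\<gamma> (t i)))"

lemma lower_sum_le_arclength_integral:
  "is_partition 0 1 n t \<Longrightarrow> ereal (lower_sum f \<gamma> n t) \<le> arclength_integral f \<gamma>"
  unfolding arclength_integral_def lower_sum_def
  by (rule SUP_upper2[of "(n, t)"]) (auto simp: is_partition_def partition01_def)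

lemma is_partition_mono:
  assumes "is_partition a b n t" "i \<le> j" "j \<le> n"
  shows "t i \<le> t j"
  using assms(2,3)
proof (induction j)
  case (Suc j)
  then show ?case
    using assms(1) unfolding is_partition_def by (metis Suc_le_eq le_Suc_eq order.trans order.refl)
qed simp

lemma is_partition_single: "a \<le> b \<Longrightarrow> is_partition a b 1 (\<lambda>i. if i = 0 then a else b)"
  by (simp add: is_partition_def)

lemma lower_sum_single_nonneg:
  assumes "a \<le> b" "\<forall>s\<in>{a..b}. 0 \<le> f (\<gamma> s)"
  shows "0 \<le> lower_sum f \<gamma> 1 (\<lambda>i. if i = 0 then a else b)"
  using assms unfolding lower_sum_def by (auto intro!: mult_nonneg_nonneg cINF_greatest)

lemma is_partition_append:
  assumes "is_partition a b n t" "is_partition b c m u"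
  shows "is_partition a c (n + m) (\<lambda>i. if i \<le> n then t i else u (i - n))"
  using assms unfolding is_partition_def
  by (auto simp: not_le Suc_diff_le less_Suc_eq_le intro: le_SucI)

lemma lower_sum_append:
  assumes "t n = u 0"
  shows "lower_sum f \<gamma> (n + m) (\<lambda>i. if i \<le> n then t i else u (i - n))
    = lower_sum f \<gamma> n t + lower_sum f \<gamma> m u"
proof -
  let ?g = "\<lambda>t i. (INF s\<in>{t i..t (Suc i)}. f (\<gamma> s)) * dist (\<gamma> (t (Suc i))) (\<gamma> (t i))"
  let ?tu = "\<lambda>i. if i \<le> n then t i else u (i - n)"
  have "sum (?g ?tu) {..<n + m} = sum (?g ?tu) {0..<n} + sum (?g ?tu) {n..<n + m}"
    by (simp only: lessThan_atLeast0 sum.atLeastLessThan_concat le0 le_add1)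
  also have "sum (?g ?tu) {0..<n} = sum (?g t) {..<n}"
    by (intro sum.cong) auto
  also have "sum (?g ?tu) {n..<n + m} = sum (\<lambda>i. ?g ?tu (i + n)) {0..<m}"
    using sum.shift_bounds_nat_ivl[of "?g ?tu" 0 n m] by (simp add: add.commute)
  also have "\<dots> = sum (?g u) {..<m}"
    using assms by (intro sum.cong) (auto simp: lessThan_atLeast0)
  finally show ?thesis
    unfolding lower_sum_def .
qed

lemma lower_sum_append_le_arclength_integral:
  assumes "is_partition 0 T n t" "is_partition T 1 m u"
  shows "ereal (lower_sum f \<gamma> n t + lower_sum f \<gamma> m u) \<le> arclength_integral f \<gamma>"
proof -
  have "t n = u 0"
    using assms by (simp add: is_partition_def)
  then show ?thesis
    using lower_sum_le_arclength_integral[OF is_partition_append[OF assms], of f \<gamma>]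
    by (simp add: lower_sum_append)
qed

lemma is_partition_reflect:
  assumes "is_partition a b n t"
  shows "is_partition a b n (\<lambda>i. a + b - t (n - i))"
proof -
  have "t (n - Suc i) \<le> t (n - i)" if "i < n" for i
  proof -
    have "t (n - Suc i) \<le> t (Suc (n - Suc i))"
      using assms that unfolding is_partition_def by simp
    then show ?thesis
      using that by (simp add: Suc_diff_Suc)
  qed
  then show ?thesis
    using assms unfolding is_partition_def by auto
qed

lemma lower_sum_reflect:
  "lower_sum f (\<lambda>s. \<gamma> (a + b - s)) n (\<lambda>i. a + b - t (n - i)) = lower_sum f \<gamma> n t"
proof -
  let ?g = "\<lambda>i. (INF s\<in>{t i..t (Suc i)}. f (\<gamma> s)) * dist (\<gamma> (t (Suc i))) (\<gamma> (t i))"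
  have "lower_sum f \<gamma> n t = (\<Sum>i<n. ?g (n - Suc i))"
    unfolding lower_sum_def by (rule sum.nat_diff_reindex[symmetric])
  also have "\<dots> = lower_sum f (\<lambda>s. \<gamma> (a + b - s)) n (\<lambda>i. a + b - t (n - i))"
    unfolding lower_sum_def
  proof (intro sum.cong refl)
    fix i assume "i \<in> {..<n}"
    then have i: "n - i = Suc (n - Suc i)"
      by simp
    have img: "{a + b - t (n - i)..a + b - t (n - Suc i)} = (\<lambda>s. a + b - s) ` {t (n - Suc i)..t (n - i)}"
      by simp
    have "(INF s\<in>{a + b - t (n - i)..a + b - t (n - Suc i)}. f (\<gamma> (a + b - s)))
        = (INF s\<in>{t (n - Suc i)..t (n - i)}. f (\<gamma> s))"
      unfolding img image_image by simp
    then show "?g (n - Suc i) = (INF s\<in>{a + b - t (n - i)..a + b - t (n - Suc i)}. f (\<gamma> (a + b - s)))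
        * dist (\<gamma> (a + b - (a + b - t (n - Suc i)))) (\<gamma> (a + b - (a + b - t (n - i))))"
      by (simp add: i dist_commute)
  qed
  finally show ?thesis ..
qed

lemma lower_sum_geometric_ladder:
  fixes \<gamma> :: "real \<Rightarrow> 'a::metric_space"
  assumes "c > 0" "lam > 1" "S > 0"
    and mono: "\<forall>i<N. \<tau> i \<le> \<tau> (Suc i)"
    and weight: "\<forall>i<N. \<forall>s\<in>{\<tau> i..\<tau> (Suc i)}. 0 < d (\<gamma> s) \<and> d (\<gamma> s) \<le> S * (c * lam ^ Suc i)"
    and step: "\<forall>i<N. c * lam ^ Suc i - c * lam ^ i \<le> dist (\<gamma> (\<tau> (Suc i))) (\<gamma> (\<tau> i))"
  shows "N * (1 - 1 / lam) / S \<le> lower_sum (\<lambda>z. 1 / d z) \<gamma> N \<tau>"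
proof -
  have "(1 - 1 / lam) / S
      \<le> (INF s\<in>{\<tau> i..\<tau> (Suc i)}. 1 / d (\<gamma> s)) * dist (\<gamma> (\<tau> (Suc i))) (\<gamma> (\<tau> i))"
    if i: "i < N" for i
  proof -
    define M where "M = S * (c * lam ^ Suc i)"
    have M: "M > 0"
      using assms(1-3) by (simp add: M_def)
    have inf: "1 / M \<le> (INF s\<in>{\<tau> i..\<tau> (Suc i)}. 1 / d (\<gamma> s))"
    proof (rule cINF_greatest)
      show "{\<tau> i..\<tau> (Suc i)} \<noteq> {}"
        using mono i by simp
      fix s assume "s \<in> {\<tau> i..\<tau> (Suc i)}"
      then have "0 < d (\<gamma> s)" "d (\<gamma> s) \<le> M"
        using weight i by (auto simp: M_def)
      then show "1 / M \<le> 1 / d (\<gamma> s)"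
        by (simp add: frac_le)
    qed
    have "(1 - 1 / lam) / S = 1 / M * (c * lam ^ Suc i - c * lam ^ i)"
      using assms(1-3) by (simp add: M_def field_simps)
    also have "\<dots> \<le> (INF s\<in>{\<tau> i..\<tau> (Suc i)}. 1 / d (\<gamma> s)) * dist (\<gamma> (\<tau> (Suc i))) (\<gamma> (\<tau> i))"
    proof (rule mult_mono)
      show "0 \<le> (INF s\<in>{\<tau> i..\<tau> (Suc i)}. 1 / d (\<gamma> s))"
          using M by (intro order_trans[OF _ inf]) simp
      show "c * lam ^ Suc i - c * lam ^ i \<le> dist (\<gamma> (\<tau> (Suc i))) (\<gamma> (\<tau> i))"
        using step i by blast
      have "lam ^ i \<le> lam ^ Suc i"
        by (rule power_increasing) (use assms(2) in auto)
      then show "0 \<le> c * lam ^ Suc i - c * lam ^ i"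
        using assms(1) by (simp add: mult_left_mono)
    qed (fact inf)
    finally show ?thesis .
  qed
  then have "(\<Sum>i<N. (1 - 1 / lam) / S) \<le> lower_sum (\<lambda>z. 1 / d z) \<gamma> N \<tau>"
    unfolding lower_sum_def by (intro sum_mono) simp
  then show ?thesis
    by simp
qed

lemma first_hitting_time:
  fixes h :: "real \<Rightarrow> real"
  assumes cont: "continuous_on {a..b} h" and "a \<le> b" "h a \<le> L" "L \<le> h b"
  obtains \<tau> where "\<tau> \<in> {a..b}" "h \<tau> = L" "\<forall>s\<in>{a..\<tau>}. h s \<le> L"
proof -
  define S where "S = {t\<in>{a..b}. L \<le> h t}"
  have "closed S"
  proof -
    have "S = {a..b} \<inter> h -` {L..}"
      by (auto simp: S_def)
    then show ?thesis
      using continuous_closed_preimage[OF cont] by auto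
  qed
  moreover have "b \<in> S" "bdd_below S"
    using assms(2,4) by (auto simp: S_def intro: bdd_belowI[of _ a])
  ultimately have "Inf S \<in> S"
    using closed_contains_Inf by blast
  define \<tau> where "\<tau> = Inf S"
  have \<tau>: "\<tau> \<in> {a..b}" "L \<le> h \<tau>"
    using \<open>Inf S \<in> S\<close> by (auto simp: \<tau>_def S_def)
  have below: "h s < L" if "a \<le> s" "s < \<tau>" for s
  proof (rule ccontr)
    assume "\<not> h s < L"
    then have "s \<in> S"
      using that \<tau> by (auto simp: S_def)
    then have "\<tau> \<le> s"
      unfolding \<tau>_def using \<open>bdd_below S\<close> by (rule cInf_lower)
    then show False
      using that by simp
  qed
  obtain \<sigma> where "a \<le> \<sigma>" "\<sigma> \<le> \<tau>" "h \<sigma> = L"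
    using IVT'[of h a L \<tau>] \<tau> assms(3) continuous_on_subset[OF cont] by auto
  with below have "h \<tau> = L"
    by (metis order_less_le order.irrefl)
  with below show ?thesis
    using \<tau>(1) by (intro that) (auto simp: order_le_less)
qed

lemma lower_sum_pad:
  assumes "is_partition u v n t" "a \<le> u" "v \<le> b" "\<forall>s\<in>{a..b}. 0 \<le> f (\<gamma> s)"
  shows "\<exists>m t'. is_partition a b m t' \<and> lower_sum f \<gamma> n t \<le> lower_sum f \<gamma> m t'"
proof -
  define l where "l = (\<lambda>i::nat. if i = 0 then a else u)"
  define r where "r = (\<lambda>i::nat. if i = 0 then v else b)"
  define lt where "lt = (\<lambda>i. if i \<le> 1 then l i else t (i - 1))"
  define ltr where "ltr = (\<lambda>i. if i \<le> 1 + n then lt i else r (i - (1 + n)))"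
  have "u \<le> v"
    using is_partition_mono[OF assms(1), of 0 n] assms(1) by (simp add: is_partition_def)
  then have "0 \<le> lower_sum f \<gamma> 1 l" "0 \<le> lower_sum f \<gamma> 1 r"
    using assms(2-4) lower_sum_single_nonneg[of a u f \<gamma>] lower_sum_single_nonneg[of v b f \<gamma>]
    by (auto simp: l_def r_def)
  moreover have "lower_sum f \<gamma> (1 + n) lt = lower_sum f \<gamma> 1 l + lower_sum f \<gamma> n t"
    using assms(1) unfolding lt_def by (intro lower_sum_append) (simp add: is_partition_def l_def)
  moreover have "lower_sum f \<gamma> (1 + n + 1) ltr = lower_sum f \<gamma> (1 + n) lt + lower_sum f \<gamma> 1 r"
    using assms(1) unfolding ltr_def
    by (intro lower_sum_append) (auto simp: is_partition_def lt_def l_def r_def)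
  moreover have "is_partition a b (1 + n + 1) ltr"
    unfolding ltr_def lt_def l_def r_def
    using assms(1) is_partition_single[OF assms(2)] is_partition_single[OF assms(3)]
    by (intro is_partition_append)
  ultimately show ?thesis
    by (intro exI[of _ "1 + n + 1"] exI[of _ ltr]) simp
qed

lemma geometric_hitting_times:
  fixes h :: "real \<Rightarrow> real"
  assumes cont: "continuous_on {a..b} h" and "a \<le> b" "c > 0" "lam > 1"
    and start: "h a \<le> c" and finish: "c * lam ^ N \<le> h b"
  obtains \<tau> where "\<And>i. i \<le> N \<Longrightarrow> \<tau> i \<in> {a..b} \<and> h (\<tau> i) = c * lam ^ i \<and> (\<forall>s\<in>{a..\<tau> i}. h s \<le> c * lam ^ i)"
    and "\<And>i. i < N \<Longrightarrow> \<tau> i \<le> \<tau> (Suc i)"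
proof -
  have "\<exists>\<tau>. \<tau> \<in> {a..b} \<and> h \<tau> = c * lam ^ i \<and> (\<forall>s\<in>{a..\<tau>}. h s \<le> c * lam ^ i)"
    if "i \<le> N" for i
  proof -
    have "c \<le> c * lam ^ i" "c * lam ^ i \<le> c * lam ^ N"
      using \<open>c > 0\<close> \<open>lam > 1\<close> that by (simp_all add: power_increasing)
    then have "h a \<le> c * lam ^ i" "c * lam ^ i \<le> h b"
      using start finish by linarith+
    then obtain \<tau> where "\<tau> \<in> {a..b}" "h \<tau> = c * lam ^ i" "\<forall>s\<in>{a..\<tau>}. h s \<le> c * lam ^ i"
      by (rule first_hitting_time[OF cont \<open>a \<le> b\<close>])
    then show ?thesis
      by blast
  qed
  then obtain \<tau> where \<tau>: "\<And>i. i \<le> N \<Longrightarrow>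
      \<tau> i \<in> {a..b} \<and> h (\<tau> i) = c * lam ^ i \<and> (\<forall>s\<in>{a..\<tau> i}. h s \<le> c * lam ^ i)"
    by metis
  have "\<tau> i \<le> \<tau> (Suc i)" if "i < N" for i
  proof (rule ccontr)
    assume "\<not> \<tau> i \<le> \<tau> (Suc i)"
    then have "\<tau> (Suc i) \<in> {a..\<tau> i}"
      using \<tau>[of "Suc i"] that by auto
    then have "h (\<tau> (Suc i)) \<le> c * lam ^ i"
      using \<tau>[of i] that by auto
    moreover have "c * lam ^ i < c * lam ^ Suc i"
      using \<open>c > 0\<close> \<open>lam > 1\<close> by simp
    ultimately show False
      using \<tau>[of "Suc i"] that by simp
  qed
  with \<tau> show ?thesis
    using that by blast
qed

lemma lower_sum_ascending_ladder:
  fixes \<gamma> :: "real \<Rightarrow> 'a::metric_space" and \<phi> :: "'a \<Rightarrow> real"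
  assumes "a \<le> b" and cont: "continuous_on {a..b} (\<lambda>s. \<phi> (\<gamma> s))"
    and lip: "\<forall>u v. \<phi> u - \<phi> v \<le> dist u v"
    and weight: "\<forall>s\<in>{a..b}. 0 < d (\<gamma> s) \<and> d (\<gamma> s) \<le> S * \<phi> (\<gamma> s)"
    and "S > 0" "c > 0" "lam > 1"
    and start: "\<phi> (\<gamma> a) \<le> c" and finish: "c * lam ^ N \<le> \<phi> (\<gamma> b)"
  shows "\<exists>n t. is_partition a b n t \<and> N * (1 - 1 / lam) / S \<le> lower_sum (\<lambda>z. 1 / d z) \<gamma> n t"
proof -
  obtain \<tau> where \<tau>: "\<And>i. i \<le> N \<Longrightarrow>
      \<tau> i \<in> {a..b} \<and> \<phi> (\<gamma> (\<tau> i)) = c * lam ^ i \<and> (\<forall>s\<in>{a..\<tau> i}. \<phi> (\<gamma> s) \<le> c * lam ^ i)"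
    and mono: "\<And>i. i < N \<Longrightarrow> \<tau> i \<le> \<tau> (Suc i)"
    using geometric_hitting_times[OF cont \<open>a \<le> b\<close> \<open>c > 0\<close> \<open>lam > 1\<close> start finish] by blast
  have "N * (1 - 1 / lam) / S \<le> lower_sum (\<lambda>z. 1 / d z) \<gamma> N \<tau>"
  proof (rule lower_sum_geometric_ladder[OF \<open>c > 0\<close> \<open>lam > 1\<close> \<open>S > 0\<close>])
    show "\<forall>i<N. \<tau> i \<le> \<tau> (Suc i)"
      using mono by blast
    show "\<forall>i<N. \<forall>s\<in>{\<tau> i..\<tau> (Suc i)}. 0 < d (\<gamma> s) \<and> d (\<gamma> s) \<le> S * (c * lam ^ Suc i)"
    proof (intro allI impI ballI)
      fix i s assume "i < N" "s \<in> {\<tau> i..\<tau> (Suc i)}"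
      then have "s \<in> {a..b}" "\<phi> (\<gamma> s) \<le> c * lam ^ Suc i"
        using \<tau>[of i] \<tau>[of "Suc i"] by auto
      moreover have "S * \<phi> (\<gamma> s) \<le> S * (c * lam ^ Suc i)"
        using \<open>S > 0\<close> \<open>\<phi> (\<gamma> s) \<le> c * lam ^ Suc i\<close> by simp
      ultimately show "0 < d (\<gamma> s) \<and> d (\<gamma> s) \<le> S * (c * lam ^ Suc i)"
        using weight by force
    qed
    show "\<forall>i<N. c * lam ^ Suc i - c * lam ^ i \<le> dist (\<gamma> (\<tau> (Suc i))) (\<gamma> (\<tau> i))"
    proof (intro allI impI)
      fix i assume "i < N"
      then have "\<phi> (\<gamma> (\<tau> (Suc i))) = c * lam ^ Suc i" "\<phi> (\<gamma> (\<tau> i)) = c * lam ^ i"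
        using \<tau>[of i] \<tau>[of "Suc i"] by auto
      then show "c * lam ^ Suc i - c * lam ^ i \<le> dist (\<gamma> (\<tau> (Suc i))) (\<gamma> (\<tau> i))"
        using lip[rule_format, of "\<gamma> (\<tau> (Suc i))" "\<gamma> (\<tau> i)"] by simp
    qed
  qed
  moreover have "is_partition (\<tau> 0) (\<tau> N) N \<tau>"
    using mono by (simp add: is_partition_def)
  moreover have "a \<le> \<tau> 0" "\<tau> N \<le> b" "\<forall>s\<in>{a..b}. 0 \<le> 1 / d (\<gamma> s)"
    using \<tau>[of 0] \<tau>[of N] weight by (auto simp: less_imp_le)
  ultimately show ?thesis
    using lower_sum_pad[of "\<tau> 0" "\<tau> N" N \<tau> a b "\<lambda>z. 1 / d z" \<gamma>] by (auto intro: order.trans)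
qed

lemma lower_sum_descending_ladder:
  fixes \<gamma> :: "real \<Rightarrow> 'a::metric_space" and \<phi> :: "'a \<Rightarrow> real"
  assumes "a \<le> b" and cont: "continuous_on {a..b} (\<lambda>s. \<phi> (\<gamma> s))"
    and lip: "\<forall>u v. \<phi> u - \<phi> v \<le> dist u v"
    and weight: "\<forall>s\<in>{a..b}. 0 < d (\<gamma> s) \<and> d (\<gamma> s) \<le> S * \<phi> (\<gamma> s)"
    and "S > 0" "c > 0" "lam > 1"
    and start: "c * lam ^ N \<le> \<phi> (\<gamma> a)" and finish: "\<phi> (\<gamma> b) \<le> c"
  shows "\<exists>n t. is_partition a b n t \<and> N * (1 - 1 / lam) / S \<le> lower_sum (\<lambda>z. 1 / d z) \<gamma> n t"
proof -
  let ?\<gamma> = "\<lambda>s. \<gamma> (a + b - s)"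
  have cont': "continuous_on {a..b} (\<lambda>s. \<phi> (?\<gamma> s))"
    by (rule continuous_on_compose2[OF cont]) (auto intro!: continuous_intros)
  have weight': "\<forall>s\<in>{a..b}. 0 < d (?\<gamma> s) \<and> d (?\<gamma> s) \<le> S * \<phi> (?\<gamma> s)"
    using weight by auto
  have "\<exists>n t. is_partition a b n t \<and> N * (1 - 1 / lam) / S \<le> lower_sum (\<lambda>z. 1 / d z) ?\<gamma> n t"
    using lower_sum_ascending_ladder[OF \<open>a \<le> b\<close> cont' lip weight' \<open>S > 0\<close> \<open>c > 0\<close> \<open>lam > 1\<close>]
      start finish by simp
  then obtain n t where "is_partition a b n t"
      and "N * (1 - 1 / lam) / S \<le> lower_sum (\<lambda>z. 1 / d z) ?\<gamma> n t"
    by blast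
  moreover have "lower_sum (\<lambda>z. 1 / d z) ?\<gamma> n t
      = lower_sum (\<lambda>z. 1 / d z) \<gamma> n (\<lambda>i. a + b - t (n - i))"
    using lower_sum_reflect[of "\<lambda>z. 1 / d z" ?\<gamma> a b n t] by simp
  ultimately show ?thesis
    using is_partition_reflect by fastforce
qed

lemma arclength_integral_ge_two_ladders:
  fixes \<gamma> :: "real \<Rightarrow> 'a::euclidean_space"
  assumes "path \<gamma>" "pathstart \<gamma> = x" "pathfinish \<gamma> = y"
    and weight: "\<forall>s\<in>{0..1}. 0 < d (\<gamma> s) \<and> d (\<gamma> s) \<le> S * dist (\<gamma> s) p \<and> d (\<gamma> s) \<le> d0 + dist (\<gamma> s) y"
    and "S > 0" "lam > 1" "d0 > 0" "dist x p > 0"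
    and reach_p: "dist x p * lam ^ N \<le> dist y p"
    and reach_y: "d0 * lam ^ N \<le> d0 + dist y p - dist x p * lam ^ N"
  shows "ereal (N * (1 - 1 / lam) * (1 + 1 / S)) \<le> arclength_integral (\<lambda>z. 1 / d z) \<gamma>"
proof -
  have \<gamma>: "\<gamma> 0 = x" "\<gamma> 1 = y" "continuous_on {0..1} \<gamma>"
    using assms(1-3) by (auto simp: pathstart_def pathfinish_def path_def)
  have "dist x p \<le> dist x p * lam ^ N"
    using \<open>lam > 1\<close> \<open>dist x p > 0\<close> by simp
  moreover have cont_p: "continuous_on {0..1} (\<lambda>s. dist (\<gamma> s) p)"
    by (intro continuous_intros \<gamma>(3))
  ultimately obtain T where T: "0 \<le> T" "T \<le> 1" "dist (\<gamma> T) p = dist x p * lam ^ N"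
    using IVT'[of "\<lambda>s. dist (\<gamma> s) p" 0 "dist x p * lam ^ N" 1] \<gamma>(1,2) reach_p by auto
  have lip_p: "\<forall>u v. dist u p - dist v p \<le> dist u v"
    using dist_triangle by (simp add: algebra_simps) blast
  obtain n t where t: "is_partition 0 T n t"
      "N * (1 - 1 / lam) / S \<le> lower_sum (\<lambda>z. 1 / d z) \<gamma> n t"
    using lower_sum_ascending_ladder[of 0 T "\<lambda>z. dist z p" \<gamma> d S "dist x p" lam N]
      continuous_on_subset[OF cont_p, of "{0..T}"]
      T \<gamma> weight lip_p \<open>S > 0\<close> \<open>lam > 1\<close> \<open>dist x p > 0\<close>
    by auto
  have lip_y: "\<forall>u v. (d0 + dist u y) - (d0 + dist v y) \<le> dist u v"
    using dist_triangle by (simp add: algebra_simps) blast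
  have "d0 * lam ^ N \<le> d0 + dist (\<gamma> T) y"
    using reach_y T(3) dist_triangle[of y p "\<gamma> T"] by (simp add: dist_commute)
  moreover have "continuous_on {T..1} (\<lambda>s. d0 + dist (\<gamma> s) y)"
    using T by (intro continuous_intros continuous_on_subset[OF \<gamma>(3)]) auto
  ultimately obtain m u where u: "is_partition T 1 m u"
      "N * (1 - 1 / lam) / 1 \<le> lower_sum (\<lambda>z. 1 / d z) \<gamma> m u"
    using lower_sum_descending_ladder[of T 1 "\<lambda>z. d0 + dist z y" \<gamma> d 1 d0 lam N]
      T \<gamma> weight lip_y \<open>d0 > 0\<close> \<open>lam > 1\<close>
    by auto
  have "N * (1 - 1 / lam) * (1 + 1 / S) = N * (1 - 1 / lam) / S + N * (1 - 1 / lam) / 1"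
    by (simp add: ring_distribs)
  then have "N * (1 - 1 / lam) * (1 + 1 / S)
      \<le> lower_sum (\<lambda>z. 1 / d z) \<gamma> n t + lower_sum (\<lambda>z. 1 / d z) \<gamma> m u"
    using t(2) u(2) by linarith
  then show ?thesis
    using lower_sum_append_le_arclength_integral[OF t(1) u(1)] by (meson ereal_less_eq(3) order.trans)
qed

section \<open>A lower bound for the uniformity constant at a cone point\<close>

lemma qh_dist_ge_two_ladders:
  fixes G :: "'a::euclidean_space set"
  assumes "open G" "G \<noteq> UNIV" "y \<in> G"
    and cone: "\<forall>z\<in>G. bdist G z \<le> S * dist z p"
    and "S > 0" "lam > 1" "dist x p > 0"
    and reach_p: "dist x p * lam ^ N \<le> dist y p"
    and reach_y: "bdist G y * lam ^ N \<le> bdist G y + dist y p - dist x p * lam ^ N"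
  shows "ereal (N * (1 - 1 / lam) * (1 + 1 / S)) \<le> qh_dist G x y"
  unfolding qh_dist_def
proof (rule INF_greatest)
  fix \<gamma> assume "\<gamma> \<in> {\<gamma>. rectifiable_curve \<gamma> \<and> path_image \<gamma> \<subseteq> G \<and> pathstart \<gamma> = x \<and> pathfinish \<gamma> = y}"
  then have \<gamma>: "path \<gamma>" "path_image \<gamma> \<subseteq> G" "pathstart \<gamma> = x" "pathfinish \<gamma> = y"
    by (auto simp: rectifiable_curve_def)
  have "\<forall>s\<in>{0..1}. 0 < bdist G (\<gamma> s) \<and> bdist G (\<gamma> s) \<le> S * dist (\<gamma> s) p
      \<and> bdist G (\<gamma> s) \<le> bdist G y + dist (\<gamma> s) y"
    using \<gamma>(2) cone bdist_pos[OF assms(1,2)]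
    by (auto simp: path_image_def bdist_def intro: infdist_triangle)
  then show "ereal (N * (1 - 1 / lam) * (1 + 1 / S)) \<le> arclength_integral (\<lambda>z. 1 / bdist G z) \<gamma>"
    using arclength_integral_ge_two_ladders[OF \<gamma>(1,3,4)] bdist_pos[OF assms(1-3)] assms(5-9)
    by blast
qed

lemma j_dist_le_geometric:
  fixes N :: nat
  assumes "0 < r" "r \<le> bdist G x" "r \<le> bdist G y" "dist x y \<le> C * lam ^ N * r"
    and "0 \<le> C" "1 \<le> lam"
  shows "j_dist G x y \<le> N * ln lam + ln (1 + C)"
proof -
  have "1 \<le> lam ^ N"
    using assms(6) by simp
  have "dist x y / min (bdist G x) (bdist G y) \<le> C * lam ^ N * r / r"
    using assms(1-5) \<open>1 \<le> lam ^ N\<close> by (intro frac_le) auto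
  also have "\<dots> \<le> lam ^ N * (1 + C) - 1"
    using assms(1) \<open>1 \<le> lam ^ N\<close> by (simp add: algebra_simps)
  finally have "1 + dist x y / min (bdist G x) (bdist G y) \<le> lam ^ N * (1 + C)"
    by simp
  moreover have "0 < 1 + dist x y / min (bdist G x) (bdist G y)"
    using assms(1-3) by (simp add: add_pos_nonneg)
  ultimately have "j_dist G x y \<le> ln (lam ^ N * (1 + C))"
    unfolding j_dist_def by simp
  also have "\<dots> = N * ln lam + ln (1 + C)"
    using assms(5,6) by (simp add: ln_mult ln_realpow)
  finally show ?thesis .
qed

lemma uniformity_const_ge_of_ladders:
  fixes G :: "'a::euclidean_space set"
  assumes ladders: "\<And>lam. lam > 1 \<Longrightarrow> \<exists>L. \<forall>N::nat. \<exists>x\<in>G. \<exists>y\<in>G.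
      ereal (N * (1 - 1 / lam) * B) \<le> qh_dist G x y \<and> j_dist G x y \<le> N * ln lam + L"
  shows "ereal B \<le> uniformity_const G"
proof (rule ccontr)
  assume "\<not> ereal B \<le> uniformity_const G"
  then obtain A where A: "1 \<le> A" "A < B" "\<forall>x\<in>G. \<forall>y\<in>G. qh_dist G x y \<le> ereal (A * j_dist G x y)"
    unfolding uniformity_const_def not_le Inf_less_iff by auto
  define lam where "lam = 2 * B / (A + B)"
    \<comment> \<open>then \<open>(1 - 1/\<lambda>) B \<ge> (ln \<lambda> / \<lambda>) B = ln \<lambda> (A + B) / 2\<close>, which beats \<open>A ln \<lambda>\<close>\<close>
  have lam: "lam > 1" "B / lam = (A + B) / 2"
    using A by (simp_all add: lam_def field_simps)
  then have "ln lam > 0"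
    by simp
  obtain L where L: "\<forall>N::nat. \<exists>x\<in>G. \<exists>y\<in>G.
      ereal (N * (1 - 1 / lam) * B) \<le> qh_dist G x y \<and> j_dist G x y \<le> N * ln lam + L"
    using ladders[OF lam(1)] by blast
  obtain N :: nat where N: "2 * A * L / (ln lam * (B - A)) < N"
    using reals_Archimedean2 by blast
  obtain x y where "x \<in> G" "y \<in> G" and k: "ereal (N * (1 - 1 / lam) * B) \<le> qh_dist G x y"
    and j: "j_dist G x y \<le> N * ln lam + L"
    using L by blast
  have "N * (1 - 1 / lam) * B \<le> A * j_dist G x y"
    using order.trans[OF k] A(3) \<open>x \<in> G\<close> \<open>y \<in> G\<close> by fastforce
  also have "\<dots> \<le> A * (N * ln lam + L)"
    using j A(1) by (simp add: mult_left_mono)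
  finally have upper: "N * (1 - 1 / lam) * B \<le> A * (N * ln lam + L)" .
  have "ln lam / lam \<le> 1 - 1 / lam"
    using ln_le_minus_one[of lam] lam(1) by (simp add: field_simps)
  then have "N * ((ln lam / lam) * B) \<le> N * ((1 - 1 / lam) * B)"
    using A by (intro mult_left_mono mult_right_mono) auto
  then have lower: "N * ln lam * ((A + B) / 2) \<le> N * (1 - 1 / lam) * B"
    by (simp add: mult.assoc flip: lam(2))
  have "N * (ln lam * (B - A)) = 2 * (N * ln lam * ((A + B) / 2)) - 2 * (A * (N * ln lam))"
    by (simp add: algebra_simps)
  also have "\<dots> \<le> 2 * (A * (N * ln lam + L)) - 2 * (A * (N * ln lam))"
    using lower upper by linarith
  also have "\<dots> = 2 * A * L"
    by (simp add: algebra_simps)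
  finally have "N * (ln lam * (B - A)) \<le> 2 * A * L" .
  with N \<open>ln lam > 0\<close> A(2) show False
    by (simp add: divide_less_eq mult.commute)
qed

lemma ball_homothety_subset_convex:
  fixes K :: "'a::real_normed_vector set"
  assumes "convex K" "ball z e \<subseteq> K" "w \<in> K" "0 < t" "t \<le> 1"
  shows "ball (w + t *\<^sub>R (z - w)) (t * e) \<subseteq> K"
proof
  fix u assume u: "u \<in> ball (w + t *\<^sub>R (z - w)) (t * e)"
  define v where "v = z + (1 / t) *\<^sub>R (u - (w + t *\<^sub>R (z - w)))"
  have "dist z v = dist u (w + t *\<^sub>R (z - w)) / t"
    using assms(4) by (simp add: v_def dist_norm)
  then have "dist z v < e"
    using u assms(4) by (simp add: dist_commute divide_less_eq mult.commute)
  then have "v \<in> K"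
    using assms(2) by auto
  moreover have "u = (1 - t) *\<^sub>R w + t *\<^sub>R v"
    using assms(4) by (simp add: v_def algebra_simps)
  ultimately show "u \<in> K"
    using convexD[OF assms(1,3), of v "1 - t" t] assms(4,5) by simp
qed

lemma homothety_le_bdist:
  fixes K :: "'a::euclidean_space set"
  assumes "convex K" "interior K \<noteq> UNIV" "0 < e" "ball z e \<subseteq> interior K"
    and "w \<in> K" "0 < t" "t \<le> 1"
  shows "w + t *\<^sub>R (z - w) \<in> interior K" "t * e \<le> bdist (interior K) (w + t *\<^sub>R (z - w))"
proof -
  have "ball (w + t *\<^sub>R (z - w)) (t * e) \<subseteq> K"
    using assms(4) interior_subset by (intro ball_homothety_subset_convex[OF assms(1) _ assms(5-7)]) blast
  then have "ball (w + t *\<^sub>R (z - w)) (t * e) \<subseteq> interior K"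
    by (simp add: interior_maximal)
  then show "w + t *\<^sub>R (z - w) \<in> interior K" "t * e \<le> bdist (interior K) (w + t *\<^sub>R (z - w))"
    using le_bdist_if_ball_subset[OF open_interior assms(2)] assms(3,6) by force+
qed

lemma qh_dist_ge_near_boundary_points:
  fixes G :: "'a::euclidean_space set" and N :: nat
  assumes "open G" "G \<noteq> UNIV" "y \<in> G" "f \<notin> G"
    and cone: "\<forall>z\<in>G. bdist G z \<le> s * dist z p"
    and "s > 0" "lam > 1" "0 < dist x p"
    and x_near: "dist x p * lam ^ N \<le> dist p f / 4" and y_near: "dist y f * lam ^ N \<le> dist p f / 4"
  shows "ereal (N * (1 - 1 / lam) * (1 + 1 / s)) \<le> qh_dist G x y"
proof -
  have "1 \<le> lam ^ N"
    using \<open>lam > 1\<close> by simp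
  have "dist y f \<le> dist p f / 4"
    using y_near mult_left_mono[OF \<open>1 \<le> lam ^ N\<close> zero_le_dist[of y f]] by linarith
  then have "3 / 4 * dist p f \<le> dist y p"
    using dist_triangle[of p f y] by (simp add: dist_commute)
  moreover have "bdist G y * lam ^ N \<le> dist p f / 4"
    using mult_right_mono[OF bdist_le_dist_outside[OF assms(3,4)], of "lam ^ N"] y_near \<open>1 \<le> lam ^ N\<close>
    by linarith
  moreover have "0 < bdist G y"
    by (rule bdist_pos[OF assms(1-3)])
  ultimately have "dist x p * lam ^ N \<le> dist y p"
    and "bdist G y * lam ^ N \<le> bdist G y + dist y p - dist x p * lam ^ N"
    using x_near zero_le_dist[of p f] by linarith+
  then show ?thesis
    by (rule qh_dist_ge_two_ladders[OF assms(1-3) cone \<open>s > 0\<close> \<open>lam > 1\<close> \<open>0 < dist x p\<close>])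
qed

lemma ladder_pair_near_cone_point:
  fixes K :: "'a::euclidean_space set" and N :: nat
  assumes "convex K" and G: "G = interior K" and ball: "0 < e" "ball z e \<subseteq> G"
    and p: "p \<in> K" "p \<notin> G" and f: "f \<in> K" "f \<notin> G" "f \<noteq> p"
    and "s > 0" and cone: "\<forall>z\<in>G. bdist G z \<le> s * dist z p" and "lam > 1"
  defines "M \<equiv> dist z p + dist z f"
  shows "\<exists>x\<in>G. \<exists>y\<in>G. ereal (N * (1 - 1 / lam) * (1 + 1 / s)) \<le> qh_dist G x y
    \<and> j_dist G x y \<le> N * ln lam + ln (1 + 8 * M / e)"
proof -
  define R where "R = dist p f"
  have R: "0 < R" "R \<le> M"
    using f(3) dist_triangle3[of p f z] by (auto simp: R_def M_def)
  have "1 \<le> lam ^ N"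
    using \<open>lam > 1\<close> by simp
  define t where "t = R / (4 * M * lam ^ N)"
  have "R \<le> 4 * M * lam ^ N"
    using R mult_left_mono[OF \<open>1 \<le> lam ^ N\<close>, of M] by linarith
  then have t: "0 < t" "t \<le> 1" "t * M * lam ^ N = R / 4"
    using R \<open>lam > 1\<close> by (simp_all add: t_def)
  define x where "x = p + t *\<^sub>R (z - p)"
  define y where "y = f + t *\<^sub>R (z - f)"
  have "G \<noteq> UNIV"
    using p(2) by auto
  have x: "x \<in> G" "t * e \<le> bdist G x" and y: "y \<in> G" "t * e \<le> bdist G y"
    using homothety_le_bdist[OF \<open>convex K\<close> _ ball(1) _ _ t(1,2)] ball(2) p(1) f(1) \<open>G \<noteq> UNIV\<close>
    by (simp_all add: x_def y_def G)
  have "z \<noteq> p"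
    using ball p(2) centre_in_ball by blast
  then have "0 < dist x p"
    using t(1) by (simp add: x_def dist_norm)
  have "dist x p \<le> t * M" "dist y f \<le> t * M"
    using t(1) by (simp_all add: x_def y_def M_def dist_norm norm_minus_commute distrib_left)
  then have "dist x p * lam ^ N \<le> R / 4" "dist y f * lam ^ N \<le> R / 4"
    using \<open>1 \<le> lam ^ N\<close> by (simp_all add: mult_right_mono flip: t(3))
  then have "ereal (N * (1 - 1 / lam) * (1 + 1 / s)) \<le> qh_dist G x y"
    using qh_dist_ge_near_boundary_points[OF _ \<open>G \<noteq> UNIV\<close> y(1) f(2) cone \<open>s > 0\<close> \<open>lam > 1\<close> \<open>0 < dist x p\<close>]
    by (simp add: G R_def)
  moreover have "j_dist G x y \<le> N * ln lam + ln (1 + 8 * M / e)"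
  proof (rule j_dist_le_geometric[OF _ x(2) y(2)])
    have "dist x y \<le> dist x p + R + dist y f"
      using dist_triangle[of x y p] dist_triangle[of p y f] dist_commute[of f y]
      unfolding R_def by linarith
    also have "\<dots> \<le> 8 * (t * M * lam ^ N)"
      using \<open>dist x p \<le> t * M\<close> \<open>dist y f \<le> t * M\<close> \<open>1 \<le> lam ^ N\<close> t(1,3) R
        mult_left_mono[OF \<open>1 \<le> lam ^ N\<close>, of "t * M"] by linarith
    also have "\<dots> = 8 * M / e * lam ^ N * (t * e)"
      using ball(1) by simp
    finally show "dist x y \<le> 8 * M / e * lam ^ N * (t * e)" .
    show "0 < t * e" "0 \<le> 8 * M / e" "1 \<le> lam"
      using t(1) ball(1) R \<open>lam > 1\<close> by simp_all
  qed
  ultimately show ?thesis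
    using x(1) y(1) by blast
qed

lemma uniformity_const_ge_at_cone_point:
  fixes K :: "'a::euclidean_space set"
  assumes "convex K" and G: "G = interior K" "G \<noteq> {}"
    and p: "p \<in> K" "p \<notin> G" and f: "f \<in> K" "f \<notin> G" "f \<noteq> p"
    and "s > 0" and cone: "\<forall>z\<in>G. bdist G z \<le> s * dist z p"
  shows "ereal (1 + 1 / s) \<le> uniformity_const G"
proof (rule uniformity_const_ge_of_ladders)
  obtain z where "z \<in> G"
    using G(2) by blast
  moreover have "open G"
    using G(1) by simp
  ultimately obtain e where "0 < e" "ball z e \<subseteq> G"
    using openE by blast
  fix lam :: real assume "lam > 1"
  then show "\<exists>L. \<forall>N::nat. \<exists>x\<in>G. \<exists>y\<in>G. ereal (N * (1 - 1 / lam) * (1 + 1 / s)) \<le> qh_dist G x y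
      \<and> j_dist G x y \<le> N * ln lam + L"
    using ladder_pair_near_cone_point[OF assms(1,2) \<open>0 < e\<close> \<open>ball z e \<subseteq> G\<close> p f \<open>s > 0\<close> cone]
    by blast
qed

section \<open>Convex polygons\<close>

lemma exists_coords_real2:
  fixes U V w :: "real^2"
  assumes "norm U = 1" "norm V = 1" "\<bar>U \<bullet> V\<bar> < 1"
  shows "\<exists>a b. w = a *\<^sub>R U + b *\<^sub>R V"
proof -
  define D where "D = U$1 * V$2 - U$2 * V$1"
  have "D\<^sup>2 + (U \<bullet> V)\<^sup>2 = (norm U)\<^sup>2 * (norm V)\<^sup>2"
    unfolding power2_norm_eq_inner by (simp add: D_def inner_vec_def sum_2 power2_eq_square algebra_simps)
  then have "D \<noteq> 0"
    using assms by (auto simp: abs_square_eq_1)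
  moreover have "(w$1 * V$2 - w$2 * V$1) * U$1 + (U$1 * w$2 - U$2 * w$1) * V$1 = w$1 * D"
    and "(w$1 * V$2 - w$2 * V$1) * U$2 + (U$1 * w$2 - U$2 * w$1) * V$2 = w$2 * D"
    by (simp_all add: D_def algebra_simps)
  ultimately have "w = ((w$1 * V$2 - w$2 * V$1) / D) *\<^sub>R U + ((U$1 * w$2 - U$2 * w$1) / D) *\<^sub>R V"
    unfolding vec_eq_iff forall_2 by (simp add: add_divide_distrib[symmetric] eq_divide_eq)
  then show ?thesis
    by blast
qed

lemma inner_wedge_normals:
  fixes U V :: "'a::real_inner"
  assumes "norm U = 1" "norm V = 1"
  shows "(V - (U \<bullet> V) *\<^sub>R U) \<bullet> (a *\<^sub>R U + b *\<^sub>R V) = b * (1 - (U \<bullet> V)\<^sup>2)"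
    and "(U - (U \<bullet> V) *\<^sub>R V) \<bullet> (a *\<^sub>R U + b *\<^sub>R V) = a * (1 - (U \<bullet> V)\<^sup>2)"
  using assms by (simp_all add: inner_diff_left inner_add_right inner_commute norm_eq_1
      power2_eq_square algebra_simps)

lemma mem_wedge_iff:
  fixes U V :: "'a::real_inner"
  assumes "norm U = 1" "norm V = 1" "\<bar>U \<bullet> V\<bar> < 1" "w - p = a *\<^sub>R U + b *\<^sub>R V"
  shows "w \<in> wedge p U V \<longleftrightarrow> 0 \<le> a \<and> 0 \<le> b"
proof -
  have "0 < 1 - (U \<bullet> V)\<^sup>2"
    using assms(3) by (simp add: abs_square_less_1)
  then show ?thesis
    using inner_wedge_normals[OF assms(1,2)] assms(4)
    by (simp add: wedge_def zero_le_mult_iff conj_commute)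
qed

lemma norm_lin_comb_sq:
  fixes U V :: "'a::real_inner"
  assumes "norm U = 1" "norm V = 1"
  shows "(norm (a *\<^sub>R U + b *\<^sub>R V))\<^sup>2 = (a + b * (U \<bullet> V))\<^sup>2 + b\<^sup>2 * (1 - (U \<bullet> V)\<^sup>2)"
  unfolding power2_norm_eq_inner using assms
  by (simp add: inner_add_left inner_add_right inner_commute norm_eq_1 power2_eq_square algebra_simps)

text \<open>With \<open>c = cos \<angle>(U, V)\<close> and \<open>n = |a U + b V|\<close>, this says \<open>V \<bullet> (a U + b V) < c n\<close>.\<close>
lemma coord_inner_lt_cos_mult_norm:
  fixes a b c n :: real
  assumes c2: "0 < 1 - c\<^sup>2" and "0 \<le> a" "b < 0" "0 < n"
    and n2: "n\<^sup>2 = (a + b * c)\<^sup>2 + b\<^sup>2 * (1 - c\<^sup>2)"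
  shows "a * c + b < c * n"
proof (cases "0 \<le> c")
  case True
  have "(a + b * c)\<^sup>2 \<le> n\<^sup>2"
    using n2 c2 by simp
  then have "a + b * c \<le> n"
    by (rule power2_le_imp_le) (use \<open>0 < n\<close> in simp)
  then have "c * (a + b * c) \<le> c * n"
    using True by (rule mult_left_mono)
  moreover have "b < b * c\<^sup>2"
    using c2 \<open>b < 0\<close> by (simp add: mult_less_cancel_left1)
  ultimately show ?thesis
    by (simp add: power2_eq_square algebra_simps)
next
  case False
  then have "a * c \<le> 0"
    using \<open>0 \<le> a\<close> by (simp add: mult_nonneg_nonpos)
  then have "0 < b * (b + 2 * a * c)"
    using \<open>b < 0\<close> by (intro mult_neg_neg) auto
  then have "0 < (1 - c\<^sup>2) * (b * (b + 2 * a * c))"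
    using c2 by simp
  moreover have "(a * c + b)\<^sup>2 - (c * n)\<^sup>2 = (1 - c\<^sup>2) * (b * (b + 2 * a * c))"
    by (simp add: power_mult_distrib n2) (simp add: power2_eq_square algebra_simps)
  ultimately have "(- (c * n))\<^sup>2 < (- (a * c + b))\<^sup>2"
    unfolding power2_minus by linarith
  moreover have "0 \<le> - (a * c + b)"
    using \<open>a * c \<le> 0\<close> \<open>b < 0\<close> by simp
  ultimately have "- (c * n) < - (a * c + b)"
    by (rule power2_less_imp_less)
  then show ?thesis
    by simp
qed

lemma arccos_inner_lt_vec_angle:
  fixes U V :: "'a::euclidean_space"
  assumes U: "norm U = 1" and V: "norm V = 1" and c: "\<bar>U \<bullet> V\<bar> < 1" and "0 \<le> a" "b < 0"
  shows "arccos (U \<bullet> V) < vec_angle V (a *\<^sub>R U + b *\<^sub>R V)"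
proof -
  define c where "c = U \<bullet> V"
  define W where "W = a *\<^sub>R U + b *\<^sub>R V"
  define n where "n = norm W"
  have c2: "0 < 1 - c\<^sup>2"
    using c by (simp add: c_def abs_square_less_1)
  have n2: "n\<^sup>2 = (a + b * c)\<^sup>2 + b\<^sup>2 * (1 - c\<^sup>2)"
    unfolding n_def W_def c_def by (rule norm_lin_comb_sq[OF U V])
  moreover have "0 < b\<^sup>2 * (1 - c\<^sup>2)"
    using c2 \<open>b < 0\<close> by simp
  ultimately have "0 < n\<^sup>2"
    by (simp add: add_nonneg_pos)
  then have "0 < n"
    by (simp add: n_def)
  have "V \<bullet> W = a * c + b"
    using V by (simp add: W_def c_def inner_add_right inner_commute norm_eq_1)
  then have "V \<bullet> W < c * n"
    using coord_inner_lt_cos_mult_norm[OF c2 \<open>0 \<le> a\<close> \<open>b < 0\<close> \<open>0 < n\<close> n2] by simp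
  moreover have "- n \<le> V \<bullet> W"
    using Cauchy_Schwarz_ineq2[of V W] V by (simp add: n_def abs_le_iff)
  ultimately have "arccos c < arccos ((V \<bullet> W) / n)"
    using \<open>0 < n\<close> c by (intro arccos_less_arccos) (auto simp: c_def divide_less_eq le_divide_eq)
  then show ?thesis
    using V by (simp add: vec_angle_def c_def W_def n_def)
qed

lemma mem_convex_hull_3_if_balanced:
  fixes p q r w :: "'a::real_vector"
  assumes "0 \<le> x" "0 \<le> y" "0 \<le> z" "0 < x + y + z"
    and "x *\<^sub>R (q - p) + y *\<^sub>R (r - p) + z *\<^sub>R (w - p) = 0"
  shows "p \<in> convex hull {q, r, w}"
proof -
  define S where "S = x + y + z"
  have "S *\<^sub>R p = x *\<^sub>R q + y *\<^sub>R r + z *\<^sub>R w"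
    using assms(5) by (simp add: S_def scaleR_add_left algebra_simps)
  moreover have "p = (1 / S) *\<^sub>R (S *\<^sub>R p)"
    using assms(4) by (simp add: S_def)
  ultimately have "p = (1 / S) *\<^sub>R (x *\<^sub>R q + y *\<^sub>R r + z *\<^sub>R w)"
    by simp
  then have "p = (x / S) *\<^sub>R q + (y / S) *\<^sub>R r + (z / S) *\<^sub>R w"
    by (simp add: scaleR_add_right)
  moreover have "x / S + y / S + z / S = 1"
    using assms(4) by (simp add: S_def flip: add_divide_distrib)
  ultimately show ?thesis
    unfolding convex_hull_3 using assms(1-4) by (fastforce simp: S_def)
qed

lemma vec_angle_sgn_left: "vec_angle (sgn u) w = vec_angle u w"
  by (cases "u = 0") (simp_all add: vec_angle_def sgn_div_norm norm_sgn field_simps)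

lemma vec_angle_eq_arccos_sgn:
  assumes "u \<noteq> 0" "v \<noteq> 0"
  shows "vec_angle u v = arccos (sgn u \<bullet> sgn v)"
  using assms by (simp add: vec_angle_def sgn_div_norm field_simps)

lemma inner_sgn_gt_neg_one:
  fixes p q r :: "'a::euclidean_space"
  assumes "q \<noteq> p" "r \<noteq> p" "p \<notin> convex hull {q, r}"
  shows "-1 < sgn (q - p) \<bullet> sgn (r - p)"
proof -
  define U V where "U = sgn (q - p)" and "V = sgn (r - p)"
  define ku kv where "ku = norm (q - p)" and "kv = norm (r - p)"
  have U: "norm U = 1" and V: "norm V = 1" and "ku > 0" "kv > 0"
    using assms(1,2) by (simp_all add: U_def V_def ku_def kv_def norm_sgn)
  have qU: "q - p = ku *\<^sub>R U" and rV: "r - p = kv *\<^sub>R V"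
    using assms(1,2) by (simp_all add: U_def V_def ku_def kv_def sgn_div_norm)
  have "U \<bullet> V \<noteq> -1"
  proof
    assume "U \<bullet> V = -1"
    then have "(U + V) \<bullet> (U + V) = 0"
      using U V by (simp add: inner_add_left inner_add_right inner_commute norm_eq_1)
    then have "U + V = 0"
      by simp
    moreover have "kv *\<^sub>R (q - p) + ku *\<^sub>R (r - p) = (ku * kv) *\<^sub>R (U + V)"
      by (simp add: qU rV scaleR_add_right mult.commute)
    ultimately have eq: "kv *\<^sub>R (q - p) + ku *\<^sub>R (r - p) + 0 *\<^sub>R (q - p) = 0"
      by simp
    have "p \<in> convex hull {q, r, q}"
      using \<open>ku > 0\<close> \<open>kv > 0\<close> by (intro mem_convex_hull_3_if_balanced[OF _ _ _ _ eq]) simp_all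
    then show False
      using assms(3) by (simp add: insert_commute)
  qed
  moreover have "-1 \<le> U \<bullet> V"
    using Cauchy_Schwarz_ineq2[of U V] U V by (simp add: abs_le_iff)
  ultimately show ?thesis
    by (simp add: U_def V_def)
qed

lemma mem_wedge_if_max_angle:
  fixes p q r w :: "real^2"
  assumes "q \<noteq> p" "r \<noteq> p" and c: "\<bar>sgn (q - p) \<bullet> sgn (r - p)\<bar> < 1"
    and hull: "p \<notin> convex hull {q, r, w}"
    and angle_q: "vec_angle (q - p) (w - p) \<le> vec_angle (q - p) (r - p)"
    and angle_r: "vec_angle (r - p) (w - p) \<le> vec_angle (q - p) (r - p)"
  shows "w \<in> wedge p (sgn (q - p)) (sgn (r - p))"
proof -
  define U V where "U = sgn (q - p)" and "V = sgn (r - p)"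
  have U: "norm U = 1" and V: "norm V = 1" and c: "\<bar>U \<bullet> V\<bar> < 1"
    using assms(1,2) c by (simp_all add: U_def V_def norm_sgn)
  have \<alpha>: "vec_angle (q - p) (r - p) = arccos (U \<bullet> V)"
    using assms(1,2) by (simp add: U_def V_def vec_angle_eq_arccos_sgn)
  define ku kv where "ku = norm (q - p)" and "kv = norm (r - p)"
  have qU: "q - p = ku *\<^sub>R U" and rV: "r - p = kv *\<^sub>R V" and "ku > 0" "kv > 0"
    using assms(1,2) by (simp_all add: U_def V_def ku_def kv_def sgn_div_norm)
  obtain a b where ab: "w - p = a *\<^sub>R U + b *\<^sub>R V"
    using exists_coords_real2[OF U V c] by blast
  have "0 \<le> a \<and> 0 \<le> b"
  proof (rule ccontr)
    assume "\<not> (0 \<le> a \<and> 0 \<le> b)"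
    then consider "a < 0" "b < 0" | "0 \<le> a" "b < 0" | "a < 0" "0 \<le> b"
      by linarith
    then show False
    proof cases
      case 1
      have eq: "(- a / ku) *\<^sub>R (q - p) + (- b / kv) *\<^sub>R (r - p) + 1 *\<^sub>R (w - p) = 0"
        using \<open>ku > 0\<close> \<open>kv > 0\<close> by (simp add: ab qU rV)
      have "0 < - a / ku" "0 < - b / kv"
        using 1 \<open>ku > 0\<close> \<open>kv > 0\<close> by (simp_all add: divide_neg_pos)
      then have "p \<in> convex hull {q, r, w}"
        by (intro mem_convex_hull_3_if_balanced[OF _ _ _ _ eq]) simp_all
      with hull show False ..
    next
      case 2
      then have "arccos (U \<bullet> V) < vec_angle (r - p) (w - p)"
        using arccos_inner_lt_vec_angle[OF U V c] by (simp add: ab V_def vec_angle_sgn_left)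
      with angle_r \<alpha> show False
        by simp
    next
      case 3
      then have "arccos (V \<bullet> U) < vec_angle (q - p) (w - p)"
        using arccos_inner_lt_vec_angle[OF V U, of b a] c
        by (simp add: ab U_def vec_angle_sgn_left inner_commute add.commute)
      with angle_q \<alpha> show False
        by (simp add: inner_commute)
    qed
  qed
  then show ?thesis
    using mem_wedge_iff[OF U V c ab] by (simp add: U_def V_def)
qed

lemma convex_hull_subset_wedge:
  fixes P :: "(real^2) set"
  assumes "p \<in> P" "p \<notin> convex hull (P - {p})" "q \<in> P - {p}" "r \<in> P - {p}"
    and c: "\<bar>sgn (q - p) \<bullet> sgn (r - p)\<bar> < 1"
    and max: "\<forall>w\<in>P - {p}. vec_angle (q - p) (w - p) \<le> vec_angle (q - p) (r - p)
      \<and> vec_angle (r - p) (w - p) \<le> vec_angle (q - p) (r - p)"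
  shows "convex hull P \<subseteq> wedge p (sgn (q - p)) (sgn (r - p))"
proof (rule hull_minimal)
  show "convex (wedge p (sgn (q - p)) (sgn (r - p)))"
    by (rule convex_wedge)
  show "P \<subseteq> wedge p (sgn (q - p)) (sgn (r - p))"
  proof
    fix w assume "w \<in> P"
    show "w \<in> wedge p (sgn (q - p)) (sgn (r - p))"
    proof (cases "w = p")
      case True
      then show ?thesis
        by (simp add: wedge_def)
    next
      case False
      have "convex hull {q, r, w} \<subseteq> convex hull (P - {p})"
        using assms(3,4) \<open>w \<in> P\<close> False by (intro hull_mono) auto
      then have "p \<notin> convex hull {q, r, w}"
        using assms(2) by auto
      then show ?thesis
        using assms(3,4) c max \<open>w \<in> P\<close> False by (intro mem_wedge_if_max_angle) auto
    qed
  qed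
qed

lemma sin_half_arccos:
  assumes "-1 \<le> c" "c \<le> 1"
  shows "sin (arccos c / 2) = sqrt ((1 - c) / 2)"
proof -
  have "0 \<le> sin (arccos c / 2)"
    using arccos_bounded[OF assms] by (intro sin_ge_zero) auto
  moreover have "(sin (arccos c / 2))\<^sup>2 = (1 - c) / 2"
    using cos_double_sin[of "arccos c / 2"] cos_arccos[OF assms] by simp
  ultimately show ?thesis
    by (simp add: real_sqrt_unique)
qed

lemma vertex_notin_interior_convex_hull:
  fixes P :: "'a::euclidean_space set"
  assumes "finite P" "\<forall>p\<in>P. p \<notin> convex hull (P - {p})" "p \<in> P"
  shows "p \<notin> interior (convex hull P)"
  using assms extreme_point_not_in_interior extreme_point_of_convex_hull_convex_independent[of P p]
  by (simp add: finite_imp_compact)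

lemma finite_vertex_angles:
  "finite P \<Longrightarrow> finite {vec_angle (q - p) (r - p) | q r. q \<in> P - {p} \<and> r \<in> P - {p}}"
  by (rule finite_image_set2) auto

lemma vec_angle_le_inner_angle:
  assumes "finite P" "q \<in> P - {p}" "w \<in> P - {p}"
  shows "vec_angle (q - p) (w - p) \<le> inner_angle P p"
  unfolding inner_angle_def using assms finite_vertex_angles[OF assms(1)] by (intro Max_ge) auto

lemma inner_angle_attained:
  assumes "finite P" "P - {p} \<noteq> {}"
  obtains q r where "q \<in> P - {p}" "r \<in> P - {p}" "inner_angle P p = vec_angle (q - p) (r - p)"
proof -
  have "inner_angle P p \<in> {vec_angle (q - p) (r - p) | q r. q \<in> P - {p} \<and> r \<in> P - {p}}"
    unfolding inner_angle_def using assms finite_vertex_angles[OF assms(1)] by (intro Max_in) auto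
  then show ?thesis
    using that by blast
qed

lemma smallest_inner_angle_attained:
  assumes "convex_polygon_vertices P"
  obtains p q r where "p \<in> P" "q \<in> P - {p}" "r \<in> P - {p}"
    "smallest_inner_angle P = vec_angle (q - p) (r - p)"
    "\<forall>w\<in>P - {p}. vec_angle (q - p) (w - p) \<le> vec_angle (q - p) (r - p)
      \<and> vec_angle (r - p) (w - p) \<le> vec_angle (q - p) (r - p)"
proof -
  have fin: "finite P" and "3 \<le> card P"
    using assms unfolding convex_polygon_vertices_def by auto
  then obtain p where p: "p \<in> P" "smallest_inner_angle P = inner_angle P p"
    using Min_in[of "inner_angle P ` P"] unfolding smallest_inner_angle_def by fastforce
  have "P - {p} \<noteq> {}"
    using \<open>3 \<le> card P\<close> card_mono[OF finite.insertI[OF finite.emptyI], of P p] by auto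
  then obtain q r where q: "q \<in> P - {p}" and r: "r \<in> P - {p}"
    and qr: "inner_angle P p = vec_angle (q - p) (r - p)"
    using inner_angle_attained[OF fin] by metis
  have "\<forall>w\<in>P - {p}. vec_angle (q - p) (w - p) \<le> vec_angle (q - p) (r - p)
      \<and> vec_angle (r - p) (w - p) \<le> vec_angle (q - p) (r - p)"
    using vec_angle_le_inner_angle[OF fin] q r by (simp flip: qr)
  then show ?thesis
    using that[OF p(1) q r] p(2) qr by simp
qed

lemma bdist_le_sin_half_vertex_angle:
  fixes P :: "(real^2) set"
  assumes "p \<in> P" "p \<notin> convex hull (P - {p})" "q \<in> P - {p}" "r \<in> P - {p}"
    and c: "\<bar>sgn (q - p) \<bullet> sgn (r - p)\<bar> < 1"
    and max: "\<forall>w\<in>P - {p}. vec_angle (q - p) (w - p) \<le> vec_angle (q - p) (r - p)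
      \<and> vec_angle (r - p) (w - p) \<le> vec_angle (q - p) (r - p)"
    and z: "z \<in> interior (convex hull P)"
  shows "bdist (interior (convex hull P)) z \<le> sin (vec_angle (q - p) (r - p) / 2) * dist z p"
proof -
  have "interior (convex hull P) \<subseteq> wedge p (sgn (q - p)) (sgn (r - p))"
    using convex_hull_subset_wedge[OF assms(1-6)] interior_subset by blast
  then have "bdist (interior (convex hull P)) z
      \<le> sqrt ((1 - sgn (q - p) \<bullet> sgn (r - p)) / 2) * dist z p"
    using assms(3,4) c z by (intro bdist_le_wedge) (auto simp: norm_sgn)
  also have "sqrt ((1 - sgn (q - p) \<bullet> sgn (r - p)) / 2) = sin (vec_angle (q - p) (r - p) / 2)"
    using assms(3,4) c by (simp add: vec_angle_eq_arccos_sgn sin_half_arccos)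
  finally show ?thesis .
qed

lemma uniformity_const_ge_at_vertex:
  fixes P :: "(real^2) set"
  assumes "convex_polygon_vertices P" "p \<in> P" "q \<in> P - {p}" "r \<in> P - {p}"
    and c: "\<bar>sgn (q - p) \<bullet> sgn (r - p)\<bar> < 1"
    and max: "\<forall>w\<in>P - {p}. vec_angle (q - p) (w - p) \<le> vec_angle (q - p) (r - p)
      \<and> vec_angle (r - p) (w - p) \<le> vec_angle (q - p) (r - p)"
  shows "ereal (1 + 1 / sin (vec_angle (q - p) (r - p) / 2)) \<le> uniformity_const (interior (convex hull P))"
proof (rule uniformity_const_ge_at_cone_point[OF convex_convex_hull refl])
  have fin: "finite P" and indep: "\<forall>p\<in>P. p \<notin> convex hull (P - {p})"
    and "interior (convex hull P) \<noteq> {}"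
    using assms(1) unfolding convex_polygon_vertices_def by auto
  then show "interior (convex hull P) \<noteq> {}" "p \<in> convex hull P" "q \<in> convex hull P" "q \<noteq> p"
    "p \<notin> interior (convex hull P)" "q \<notin> interior (convex hull P)"
    using vertex_notin_interior_convex_hull[OF fin indep] assms(2,3) by (auto simp: hull_inc)
  show "0 < sin (vec_angle (q - p) (r - p) / 2)"
    using assms(3,4) c by (simp add: vec_angle_eq_arccos_sgn sin_half_arccos)
  show "\<forall>z\<in>interior (convex hull P).
      bdist (interior (convex hull P)) z \<le> sin (vec_angle (q - p) (r - p) / 2) * dist z p"
    using bdist_le_sin_half_vertex_angle[OF assms(2) _ assms(3,4) c max] indep assms(2) by blast
qed

lemma one_le_uniformity_const: "ereal 1 \<le> uniformity_const G"
  unfolding uniformity_const_def by (rule Inf_greatest) auto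

theorem theorem1p8:
  fixes P :: "(real^2) set" and G :: "(real^2) set" and \<alpha> :: real
  assumes "convex_polygon_vertices P"
    and "G = interior (convex hull P)"
    and "\<alpha> = smallest_inner_angle P"
  shows "ereal (1 + 1 / sin (\<alpha> / 2)) \<le> uniformity_const G"
proof -
  obtain p q r where p: "p \<in> P" and q: "q \<in> P - {p}" and r: "r \<in> P - {p}"
    and \<alpha>: "\<alpha> = vec_angle (q - p) (r - p)" and max: "\<forall>w\<in>P - {p}.
      vec_angle (q - p) (w - p) \<le> \<alpha> \<and> vec_angle (r - p) (w - p) \<le> \<alpha>"
    using smallest_inner_angle_attained[OF assms(1)] assms(3) by metis
  define c where "c = sgn (q - p) \<bullet> sgn (r - p)"
  have "p \<notin> convex hull {q, r}"
    using assms(1) p q r hull_mono[of "{q, r}" "P - {p}"]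
    unfolding convex_polygon_vertices_def by blast
  then have "-1 < c"
    using q r unfolding c_def by (intro inner_sgn_gt_neg_one) auto
  moreover have "c \<le> 1"
    using norm_cauchy_schwarz[of "sgn (q - p)" "sgn (r - p)"] q r by (simp add: c_def norm_sgn)
  ultimately consider "c = 1" | "\<bar>c\<bar> < 1"
    by linarith
  then show ?thesis
  proof cases
    case 1
    \<comment> \<open>Then \<open>\<alpha> = 0\<close> (impossible for a polygon); \<open>1 / sin 0 = 0\<close> in HOL makes the claim \<open>A\<^sub>G \<ge> 1\<close>.\<close>
    then show ?thesis
      using one_le_uniformity_const[of G] q r by (simp add: \<alpha> c_def vec_angle_eq_arccos_sgn)
  next
    case 2
    then show ?thesis
      using uniformity_const_ge_at_vertex[OF assms(1) p q r] max by (simp add: \<alpha> assms(2) c_def)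
  qed
qed

end
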